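(* Fix an integer $k\ge 3$ and let $n$ be sufficiently large (so that $p\le 1$ below). Let $\widetilde G$ be a random graph drawn from $\mathcal{G}(n,p)$ with $p=1000k^2/n$. Then with probability $1-2^{-\Omega(n)}$, $\widetilde G$ has at most $2000k^2 n$ edges and is $\varepsilon$-far from being $K_k$-minor free for $\varepsilon=1/(50k^2)$.
   Context: $\mathcal{G}(n,p)$: graph on $n$ labelled vertices where each of the $\binom n2$ possible edges is present independently with probability $p$. A graph $G$ with $m$ edges is $\varepsilon$-far from being $K_k$-minor free if more than $\varepsilon m$ edges must be removed from $G$ so that the complete graph $K_k$ is not a minor of the resulting graph (a minor is a graph isomorphic to one obtained from a subgraph by edge contractions). The $\Omega(\cdot)$ hides a constant depending only on $k$. *)

theory Defs
  imports Complex_Main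
begin

type_synonym 'a graph = "'a set \<times> 'a set set"

definition wf_graph :: "'a graph \<Rightarrow> bool" where
  "wf_graph G \<longleftrightarrow> finite (fst G) \<and>
     (\<forall>e\<in>snd G. \<exists>a b. a \<in> fst G \<and> b \<in> fst G \<and> a \<noteq> b \<and> e = {a, b})"

definition subgraph :: "'a graph \<Rightarrow> 'a graph \<Rightarrow> bool" where
  "subgraph H G \<longleftrightarrow> wf_graph H \<and> fst H \<subseteq> fst G \<and> snd H \<subseteq> snd G"

text \<open>Contraction of the edge {u,v}: vertex v is merged into u; loops and parallel
  edges are discarded (simple graph).\<close>
definition contract :: "'a graph \<Rightarrow> 'a \<Rightarrow> 'a \<Rightarrow> 'a graph" where
  "contract G u v =
     (fst G - {v},
      {e \<in> snd G. v \<notin> e} \<union> {{u, w} | w. {v, w} \<in> snd G \<and> w \<noteq> u})"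

inductive contracts_to :: "'a graph \<Rightarrow> 'a graph \<Rightarrow> bool" where
  refl: "contracts_to G G"
| step: "{u, v} \<in> snd G \<Longrightarrow> u \<noteq> v \<Longrightarrow> contracts_to (contract G u v) H \<Longrightarrow> contracts_to G H"

definition is_complete_graph :: "nat \<Rightarrow> 'a graph \<Rightarrow> bool" where
  "is_complete_graph k H \<longleftrightarrow> finite (fst H) \<and> card (fst H) = k \<and>
     snd H = {{a, b} | a b. a \<in> fst H \<and> b \<in> fst H \<and> a \<noteq> b}"

definition has_K_minor :: "nat \<Rightarrow> 'a graph \<Rightarrow> bool" where
  "has_K_minor k G \<longleftrightarrow> (\<exists>S H. subgraph S G \<and> contracts_to S H \<and> is_complete_graph k H)"

definition far_from_K_minor_free :: "real \<Rightarrow> nat \<Rightarrow> 'a graph \<Rightarrow> bool" where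
  "far_from_K_minor_free eps k G \<longleftrightarrow>
     (\<forall>F \<subseteq> snd G. \<not> has_K_minor k (fst G, snd G - F) \<longrightarrow>
        real (card F) > eps * real (card (snd G)))"

definition all_edges :: "nat \<Rightarrow> nat set set" where
  "all_edges n = {{a, b} | a b. a < n \<and> b < n \<and> a \<noteq> b}"

text \<open>Probability that G(n,p) (each of the n choose 2 edges present independently with
  probability p) satisfies property P.\<close>
definition gnp_prob :: "nat \<Rightarrow> real \<Rightarrow> (nat graph \<Rightarrow> bool) \<Rightarrow> real" where
  "gnp_prob n p P =
     (\<Sum>E \<in> {E. E \<subseteq> all_edges n \<and> P ({..<n}, E)}.
        p ^ card E * (1 - p) ^ (card (all_edges n) - card E))"

end

theory Submission
  imports Defs
begin

text \<open>Put \<open>a = n div (k + 2)\<close>. If every two disjoint \<open>a\<close>-sets of vertices are joined by an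
  edge, then \<open>k\<close> disjoint connected \<open>a\<close>-sets can be chosen greedily (any \<open>3 a\<close> vertices contain a
  connected \<open>a\<close>-set), and contracting them gives \<open>K\<^sub>k\<close>. In \<open>G(n, p)\<close> with \<open>p = 1000 k\<^sup>2 / n\<close>,
  the exponential Markov inequality bounds the probability that a fixed pair of disjoint \<open>a\<close>-sets
  spans at most \<open>40 n\<close> edges by \<open>exp (- 125 n) 2 ^ (40 n)\<close>, small enough for a union bound over
  the at most \<open>4 ^ n\<close> pairs; likewise more than \<open>2000 k\<^sup>2 n\<close> edges occur with probability at most
  \<open>exp (- 2 n)\<close>. Outside these events, deleting \<open>\<epsilon> |E| \<le> 40 n\<close> edges still leaves every pair
  joined, hence a \<open>K\<^sub>k\<close>-minor.\<close>

section \<open>Connected vertex sets\<close>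

definition connected_in :: "'a set set \<Rightarrow> 'a set \<Rightarrow> bool" where
  "connected_in E X \<longleftrightarrow> (\<forall>Y\<subseteq>X. Y \<noteq> {} \<longrightarrow> Y \<noteq> X \<longrightarrow> (\<exists>u\<in>Y. \<exists>w\<in>X - Y. {u, w} \<in> E))"

lemma connected_inD:
  "connected_in E X \<Longrightarrow> Y \<subseteq> X \<Longrightarrow> Y \<noteq> {} \<Longrightarrow> Y \<noteq> X \<Longrightarrow> \<exists>u\<in>Y. \<exists>w\<in>X - Y. {u, w} \<in> E"
  unfolding connected_in_def by blast

lemma connected_inI:
  "(\<And>Y. Y \<subseteq> X \<Longrightarrow> Y \<noteq> {} \<Longrightarrow> Y \<noteq> X \<Longrightarrow> \<exists>u\<in>Y. \<exists>w\<in>X - Y. {u, w} \<in> E) \<Longrightarrow> connected_in E X"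
  unfolding connected_in_def by blast

lemma connected_in_singleton: "connected_in E {x}"
  by (rule connected_inI) blast

lemma connected_in_insert:
  assumes K: "connected_in E K" and "x \<in> K" "y \<notin> K" "{x, y} \<in> E"
  shows "connected_in E (insert y K)"
proof (rule connected_inI)
  fix Y assume Y: "Y \<subseteq> insert y K" "Y \<noteq> {}" "Y \<noteq> insert y K"
  show "\<exists>u\<in>Y. \<exists>w\<in>insert y K - Y. {u, w} \<in> E"
  proof (cases "Y - {y} \<subseteq> K \<and> Y - {y} \<noteq> {} \<and> Y - {y} \<noteq> K")
    case True
    with connected_inD[OF K] obtain u w where "u \<in> Y - {y}" "w \<in> K - (Y - {y})" "{u, w} \<in> E"
      by blast
    with \<open>y \<notin> K\<close> show ?thesis by blast
  next
    case False
    then consider "Y = {y}" | "Y = K" using Y by blast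
    then show ?thesis
    proof cases
      case 1
      have "{y, x} \<in> E" using \<open>{x, y} \<in> E\<close> by (simp add: insert_commute)
      with 1 \<open>x \<in> K\<close> \<open>y \<notin> K\<close> show ?thesis by blast
    next
      case 2
      with \<open>x \<in> K\<close> \<open>y \<notin> K\<close> \<open>{x, y} \<in> E\<close> show ?thesis by blast
    qed
  qed
qed

lemma connected_in_mono:
  assumes "connected_in E C" and "\<And>y z. y \<in> C \<Longrightarrow> z \<in> C \<Longrightarrow> {y, z} \<in> E \<Longrightarrow> {y, z} \<in> E'"
  shows "connected_in E' C"
proof (rule connected_inI)
  fix Y assume Y: "Y \<subseteq> C" "Y \<noteq> {}" "Y \<noteq> C"
  with connected_inD[OF assms(1)] obtain y z where "y \<in> Y" "z \<in> C - Y" "{y, z} \<in> E"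
    by blast
  with Y assms(2) show "\<exists>u\<in>Y. \<exists>w\<in>C - Y. {u, w} \<in> E'" by blast
qed

lemma connected_in_subset_card:
  assumes "connected_in E C" "finite C" "1 \<le> j" "j \<le> card C"
  shows "\<exists>D\<subseteq>C. connected_in E D \<and> card D = j"
  using assms(3,4)
proof (induction j rule: nat_induct_at_least)
  case base
  then obtain c where "c \<in> C" by fastforce
  then show ?case using connected_in_singleton[of E c] by auto
next
  case (Suc j)
  then obtain D where D: "D \<subseteq> C" "connected_in E D" "card D = j" by auto
  have "D \<noteq> {}" "D \<noteq> C" using D Suc by auto
  with connected_inD[OF assms(1) \<open>D \<subseteq> C\<close>] obtain u w where "u \<in> D" "w \<in> C - D" "{u, w} \<in> E"
    by blast
  moreover have "finite D" using D(1) assms(2) finite_subset by blast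
  ultimately have "insert w D \<subseteq> C" "connected_in E (insert w D)" "card (insert w D) = Suc j"
    using D connected_in_insert[OF D(2)] by auto
  then show ?case by blast
qed

definition edge_closed :: "'a set set \<Rightarrow> 'a set \<Rightarrow> 'a set \<Rightarrow> bool" where
  "edge_closed E W X \<longleftrightarrow> X \<subseteq> W \<and> (\<forall>u\<in>X. \<forall>v\<in>W - X. {u, v} \<notin> E)"

lemma edge_closed_Diff:
  assumes "edge_closed E W X" "edge_closed E X K"
  shows "edge_closed E W (X - K)"
  unfolding edge_closed_def
proof (intro conjI ballI)
  show "X - K \<subseteq> W" using assms(1) unfolding edge_closed_def by blast
  fix u v assume "u \<in> X - K" "v \<in> W - (X - K)"
  then consider "v \<in> K" | "v \<in> W - X" by blast
  then show "{u, v} \<notin> E"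
  proof cases
    case 1
    with \<open>u \<in> X - K\<close> assms(2) show ?thesis unfolding edge_closed_def by (metis insert_commute)
  next
    case 2
    with \<open>u \<in> X - K\<close> assms(1) show ?thesis unfolding edge_closed_def by blast
  qed
qed

lemma connected_in_component:
  assumes "finite X" "x \<in> X"
  obtains K where "x \<in> K" "connected_in E K" "edge_closed E X K"
proof -
  let ?C = "\<lambda>K. K \<subseteq> X \<and> x \<in> K \<and> connected_in E K"
  have "?C {x}" using assms connected_in_singleton by auto
  moreover have "\<forall>K. ?C K \<longrightarrow> card K < Suc (card X)"
    using assms(1) by (simp add: card_mono le_imp_less_Suc)
  ultimately obtain K where K: "?C K" and Kmax: "\<And>K'. ?C K' \<Longrightarrow> card K' \<le> card K"
    using ex_has_greatest_nat[of ?C "{x}" card "Suc (card X)"] by blast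
  have "finite K" using K assms(1) finite_subset by blast
  have "{u, v} \<notin> E" if "u \<in> K" "v \<in> X - K" for u v
  proof
    assume "{u, v} \<in> E"
    then have "?C (insert v K)" using K that connected_in_insert[of E K u v] by auto
    then show False using Kmax[of "insert v K"] that \<open>finite K\<close> by auto
  qed
  then show thesis using that K unfolding edge_closed_def by blast
qed

definition joins_disjoint_sets :: "'a set set \<Rightarrow> 'a set \<Rightarrow> nat \<Rightarrow> bool" where
  "joins_disjoint_sets E V a \<longleftrightarrow>
     (\<forall>A B. A \<subseteq> V \<longrightarrow> B \<subseteq> V \<longrightarrow> A \<inter> B = {} \<longrightarrow> card A = a \<longrightarrow> card B = a \<longrightarrow>
        (\<exists>u\<in>A. \<exists>v\<in>B. {u, v} \<in> E))"

lemma joins_disjoint_setsD: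
  assumes "joins_disjoint_sets E V a" "A \<subseteq> V" "B \<subseteq> V" "A \<inter> B = {}" "a \<le> card A" "a \<le> card B"
  shows "\<exists>u\<in>A. \<exists>v\<in>B. {u, v} \<in> E"
proof -
  obtain A' where A': "A' \<subseteq> A" "card A' = a" using obtain_subset_with_card_n[OF assms(5)] .
  obtain B' where B': "B' \<subseteq> B" "card B' = a" using obtain_subset_with_card_n[OF assms(6)] .
  have "A' \<subseteq> V" "B' \<subseteq> V" "A' \<inter> B' = {}" using A'(1) B'(1) assms(2-4) by blast+
  from assms(1)[unfolded joins_disjoint_sets_def, rule_format, OF this A'(2) B'(2)]
  obtain u v where "u \<in> A'" "v \<in> B'" "{u, v} \<in> E" by blast
  with \<open>A' \<subseteq> A\<close> \<open>B' \<subseteq> B\<close> show ?thesis by blast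
qed

lemma joins_disjoint_sets_subset:
  assumes "joins_disjoint_sets E V a" "W \<subseteq> V"
  shows "joins_disjoint_sets E W a"
  unfolding joins_disjoint_sets_def
proof (intro allI impI)
  fix A B assume "A \<subseteq> W" "B \<subseteq> W" "A \<inter> B = {}" "card A = a" "card B = a"
  with assms show "\<exists>u\<in>A. \<exists>v\<in>B. {u, v} \<in> E"
    using joins_disjoint_setsD[of E V a A B] by auto
qed

text \<open>A minimal edge-closed set of size at least \<open>a\<close> would consist of components of size below
  \<open>a\<close>; removing one of them shows it has fewer than \<open>2 a\<close> vertices, so its complement in \<open>W\<close>
  has at least \<open>a\<close> vertices and must be joined to it.\<close>
lemma exists_connected_in_card_ge:
  assumes W: "finite W" "1 \<le> a" "3 * a \<le> card W" and joins: "joins_disjoint_sets E W a"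
  shows "\<exists>C\<subseteq>W. connected_in E C \<and> a \<le> card C"
proof (rule ccontr)
  assume small: "\<not> ?thesis"
  have "edge_closed E W W \<and> a \<le> card W" using W unfolding edge_closed_def by auto
  then obtain X where X: "edge_closed E W X" "a \<le> card X"
    and Xmin: "\<And>Y. edge_closed E W Y \<and> a \<le> card Y \<Longrightarrow> card X \<le> card Y"
    using ex_has_least_nat[of "\<lambda>X. edge_closed E W X \<and> a \<le> card X" W card] by blast
  have "X \<subseteq> W" using X(1) unfolding edge_closed_def by blast
  then have "finite X" using W(1) finite_subset by blast
  obtain x where "x \<in> X" using X(2) W(2) by fastforce
  then obtain K where K: "x \<in> K" "connected_in E K" "edge_closed E X K"
    using connected_in_component \<open>finite X\<close> by metis
  have "K \<subseteq> X" using K(3) unfolding edge_closed_def by blast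
  have "card K < a" using small K \<open>K \<subseteq> X\<close> \<open>X \<subseteq> W\<close> by (meson not_le order_trans)
  have "card K \<ge> 1" using K(1) \<open>K \<subseteq> X\<close> \<open>finite X\<close> by (metis One_nat_def Suc_leI card_gt_0_iff empty_iff finite_subset)
  have cXK: "card (X - K) = card X - card K"
    using \<open>K \<subseteq> X\<close> \<open>finite X\<close> by (simp add: card_Diff_subset finite_subset)
  have "card X < 2 * a"
  proof (rule ccontr)
    assume "\<not> card X < 2 * a"
    then have "a \<le> card (X - K)" using cXK \<open>card K < a\<close> by linarith
    then have "card X \<le> card (X - K)" using Xmin edge_closed_Diff[OF X(1) K(3)] by blast
    then show False using cXK \<open>card K \<ge> 1\<close> X(2) W(2) by linarith
  qed
  then have "a \<le> card (W - X)"
    using W(3) \<open>X \<subseteq> W\<close> W(1) by (simp add: card_Diff_subset finite_subset)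
  then obtain u v where "u \<in> X" "v \<in> W - X" "{u, v} \<in> E"
    using joins_disjoint_setsD[OF joins \<open>X \<subseteq> W\<close>, of "W - X"] X(2) by blast
  then show False using X(1) unfolding edge_closed_def by blast
qed

lemma exists_connected_in_card_eq:
  assumes "finite W" "1 \<le> a" "3 * a \<le> card W" "joins_disjoint_sets E W a"
  shows "\<exists>C\<subseteq>W. connected_in E C \<and> card C = a"
proof -
  obtain C where "C \<subseteq> W" "connected_in E C" "a \<le> card C"
    using exists_connected_in_card_ge[OF assms] by blast
  moreover have "finite C" using \<open>C \<subseteq> W\<close> assms(1) finite_subset by blast
  ultimately obtain D where "D \<subseteq> C" "connected_in E D" "card D = a"
    using connected_in_subset_card[of E C a] assms(2) by blast
  with \<open>C \<subseteq> W\<close> show ?thesis by blast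
qed

section \<open>Complete minors from branch sets\<close>

definition complete_minor_model :: "nat \<Rightarrow> 'a set set \<Rightarrow> (nat \<Rightarrow> 'a set) \<Rightarrow> bool" where
  "complete_minor_model k E B \<longleftrightarrow>
     (\<forall>i<k. B i \<noteq> {} \<and> connected_in E (B i)) \<and>
     (\<forall>i<k. \<forall>j<k. i \<noteq> j \<longrightarrow> B i \<inter> B j = {} \<and> (\<exists>x\<in>B i. \<exists>y\<in>B j. {x, y} \<in> E))"

lemma complete_minor_modelI:
  assumes "\<And>i. i < k \<Longrightarrow> B i \<noteq> {}" "\<And>i. i < k \<Longrightarrow> connected_in E (B i)"
    and "\<And>i j. i < k \<Longrightarrow> j < k \<Longrightarrow> i \<noteq> j \<Longrightarrow> B i \<inter> B j = {}"
    and "\<And>i j. i < k \<Longrightarrow> j < k \<Longrightarrow> i \<noteq> j \<Longrightarrow> \<exists>x\<in>B i. \<exists>y\<in>B j. {x, y} \<in> E"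
  shows "complete_minor_model k E B"
  using assms unfolding complete_minor_model_def by simp

lemma complete_minor_modelD:
  assumes "complete_minor_model k E B" "i < k"
  shows "B i \<noteq> {}" "connected_in E (B i)"
    and "j < k \<Longrightarrow> i \<noteq> j \<Longrightarrow> B i \<inter> B j = {}"
    and "j < k \<Longrightarrow> i \<noteq> j \<Longrightarrow> \<exists>x\<in>B i. \<exists>y\<in>B j. {x, y} \<in> E"
  using assms unfolding complete_minor_model_def by simp_all

lemma complete_minor_model_mono:
  assumes model: "complete_minor_model k E B"
    and E': "\<And>i j x y. i < k \<Longrightarrow> j < k \<Longrightarrow> x \<in> B i \<Longrightarrow> y \<in> B j \<Longrightarrow> {x, y} \<in> E \<Longrightarrow> {x, y} \<in> E'"
  shows "complete_minor_model k E' B"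
proof (rule complete_minor_modelI)
  fix i assume i: "i < k"
  show "B i \<noteq> {}" using complete_minor_modelD(1)[OF model i] .
  show "connected_in E' (B i)"
    using complete_minor_modelD(2)[OF model i] by (rule connected_in_mono) (rule E'[OF i i])
next
  fix i j assume ij: "i < k" "j < k" "i \<noteq> j"
  show "B i \<inter> B j = {}" using complete_minor_modelD(3)[OF model ij(1) ij(2,3)] .
  obtain x y where "x \<in> B i" "y \<in> B j" "{x, y} \<in> E"
    using complete_minor_modelD(4)[OF model ij(1) ij(2,3)] by blast
  with E'[OF ij(1,2)] show "\<exists>x\<in>B i. \<exists>y\<in>B j. {x, y} \<in> E'" by blast
qed

lemma contract_simps:
  "fst (contract G u w) = fst G - {w}"
  "snd (contract G u w) = {e \<in> snd G. w \<notin> e} \<union> {{u, x} | x. {w, x} \<in> snd G \<and> x \<noteq> u}"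
  by (simp_all add: contract_def)

lemma contract_edge_kept: "e \<in> snd G \<Longrightarrow> w \<notin> e \<Longrightarrow> e \<in> snd (contract G u w)"
  by (simp add: contract_simps)

lemma contract_edge_moved: "{w, x} \<in> snd G \<Longrightarrow> x \<noteq> u \<Longrightarrow> {u, x} \<in> snd (contract G u w)"
  unfolding contract_simps by (rule UnI2) blast

lemma wf_graph_contract:
  assumes "wf_graph G" "u \<in> fst G" "u \<noteq> w"
  shows "wf_graph (contract G u w)"
  unfolding wf_graph_def contract_simps
proof (intro conjI ballI)
  show "finite (fst G - {w})" using assms(1) unfolding wf_graph_def by blast
  have edge: "\<exists>a b. a \<in> fst G \<and> b \<in> fst G \<and> a \<noteq> b \<and> e = {a, b}" if "e \<in> snd G" for e
    using assms(1) that unfolding wf_graph_def by blast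
  fix e assume e: "e \<in> {e \<in> snd G. w \<notin> e} \<union> {{u, x} | x. {w, x} \<in> snd G \<and> x \<noteq> u}"
  show "\<exists>a b. a \<in> fst G - {w} \<and> b \<in> fst G - {w} \<and> a \<noteq> b \<and> e = {a, b}"
  proof (cases "e \<in> snd G \<and> w \<notin> e")
    case True
    then show ?thesis using edge by fastforce
  next
    case False
    then obtain x where x: "e = {u, x}" "{w, x} \<in> snd G" "x \<noteq> u" using e by blast
    with edge obtain a b where "a \<in> fst G" "b \<in> fst G" "a \<noteq> b" "{w, x} = {a, b}" by blast
    then have "x \<in> fst G" "x \<noteq> w" by (auto simp: doubleton_eq_iff)
    with x assms(2,3) show ?thesis by blast
  qed
qed

lemma connected_in_contract:
  assumes C: "connected_in (snd G) C" and "u \<in> C" "w \<in> C" "u \<noteq> w"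
  shows "connected_in (snd (contract G u w)) (C - {w})"
proof (rule connected_inI)
  let ?E = "snd (contract G u w)"
  fix Y assume Y: "Y \<subseteq> C - {w}" "Y \<noteq> {}" "Y \<noteq> C - {w}"
  show "\<exists>y\<in>Y. \<exists>z\<in>C - {w} - Y. {y, z} \<in> ?E"
  proof (cases "u \<in> Y")
    case True
    have "insert w Y \<subseteq> C" "insert w Y \<noteq> {}" "insert w Y \<noteq> C" using Y \<open>w \<in> C\<close> by auto
    then obtain y z where yz: "y \<in> insert w Y" "z \<in> C - insert w Y" "{y, z} \<in> snd G"
      using connected_inD[OF C] by blast
    show ?thesis
    proof (cases "y = w")
      case True
      with yz \<open>u \<in> Y\<close> have "{u, z} \<in> ?E" by (intro contract_edge_moved) auto
      then show ?thesis using yz \<open>u \<in> Y\<close> by blast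
    next
      case False
      with yz have "{y, z} \<in> ?E" by (intro contract_edge_kept) auto
      then show ?thesis using yz False by blast
    qed
  next
    case False
    have "Y \<subseteq> C" "w \<notin> Y" using Y(1) by auto
    then have "Y \<noteq> C" using \<open>w \<in> C\<close> by blast
    then obtain y z where yz: "y \<in> Y" "z \<in> C - Y" "{y, z} \<in> snd G"
      using connected_inD[OF C \<open>Y \<subseteq> C\<close> Y(2)] by blast
    have "y \<noteq> w" "y \<noteq> u" using yz(1) \<open>w \<notin> Y\<close> False by auto
    show ?thesis
    proof (cases "z = w")
      case True
      then have "{w, y} \<in> snd G" using yz(3) by (simp only: insert_commute)
      then have "{u, y} \<in> ?E" using \<open>y \<noteq> u\<close> by (rule contract_edge_moved)
      then have "{y, u} \<in> ?E" by (simp only: insert_commute)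
      then show ?thesis using yz \<open>u \<in> C\<close> \<open>u \<noteq> w\<close> False by blast
    next
      case False
      with yz \<open>y \<noteq> w\<close> have "{y, z} \<in> ?E" by (intro contract_edge_kept) auto
      then show ?thesis using yz False by blast
    qed
  qed
qed

lemma complete_minor_model_contract:
  assumes model: "complete_minor_model k (snd G) B"
    and i: "i < k" and u: "u \<in> B i" and w: "w \<in> B i" and "u \<noteq> w"
  shows "complete_minor_model k (snd (contract G u w)) (B(i := B i - {w}))"
proof -
  let ?E = "snd (contract G u w)" and ?B = "B(i := B i - {w})"
  note disj = complete_minor_modelD(3)[OF model] and adj = complete_minor_modelD(4)[OF model]
  have w_notin: "w \<notin> B j" if "j < k" "j \<noteq> i" for j
    using disj[OF that(1) i that(2)] w by blast
  have adj_other: "\<exists>x\<in>?B j. \<exists>y\<in>?B l. {x, y} \<in> ?E" if jl: "j < k" "l < k" "j \<noteq> l" "l \<noteq> i" for j l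
  proof -
    obtain x y where xy: "x \<in> B j" "y \<in> B l" "{x, y} \<in> snd G" using adj[OF jl(1-3)] by blast
    have "y \<noteq> w" "y \<in> ?B l" using w_notin[OF jl(2,4)] xy(2) jl(4) by auto
    show ?thesis
    proof (cases "x = w")
      case True
      then have "j = i" using xy(1) w_notin[OF jl(1)] by blast
      then have "y \<noteq> u" using disj[OF i jl(2)] jl u xy(2) by blast
      then have "{u, y} \<in> ?E" using xy(3) True by (simp add: contract_edge_moved)
      moreover have "u \<in> ?B j" using \<open>j = i\<close> u \<open>u \<noteq> w\<close> by simp
      ultimately show ?thesis using \<open>y \<in> ?B l\<close> by blast
    next
      case False
      then have "{x, y} \<in> ?E" using xy(3) \<open>y \<noteq> w\<close> by (intro contract_edge_kept) auto
      moreover have "x \<in> ?B j" using xy(1) False by auto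
      ultimately show ?thesis using \<open>y \<in> ?B l\<close> by blast
    qed
  qed
  show ?thesis
  proof (rule complete_minor_modelI)
    fix j assume j: "j < k"
    show "?B j \<noteq> {}"
      using complete_minor_modelD(1)[OF model j] u \<open>u \<noteq> w\<close> by (cases "j = i") auto
    show "connected_in ?E (?B j)"
    proof (cases "j = i")
      case True
      with connected_in_contract[OF complete_minor_modelD(2)[OF model i] u w \<open>u \<noteq> w\<close>]
      show ?thesis by simp
    next
      case False
      have "connected_in ?E (B j)"
      proof (rule connected_in_mono[OF complete_minor_modelD(2)[OF model j]])
        fix y z assume "y \<in> B j" "z \<in> B j" "{y, z} \<in> snd G"
        with w_notin[OF j False] show "{y, z} \<in> ?E" by (intro contract_edge_kept) auto
      qed
      with False show ?thesis by simp
    qed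
  next
    fix j l assume jl: "j < k" "l < k" "j \<noteq> l"
    show "?B j \<inter> ?B l = {}" using disj[OF jl] by auto
    show "\<exists>x\<in>?B j. \<exists>y\<in>?B l. {x, y} \<in> ?E"
    proof (cases "l = i")
      case True
      with jl have "j \<noteq> i" by simp
      then obtain x y where xy: "x \<in> ?B l" "y \<in> ?B j" "{x, y} \<in> ?E"
        using adj_other[OF jl(2,1)] jl(3) by blast
      have "{y, x} \<in> ?E" using xy(3) by (simp only: insert_commute)
      with xy(1,2) show ?thesis by blast
    next
      case False
      show ?thesis using adj_other[OF jl False] .
    qed
  qed
qed

lemma is_complete_graph_if_singleton_branch_sets:
  assumes wf: "wf_graph G" and V: "fst G = (\<Union>i<k. B i)" and model: "complete_minor_model k (snd G) B"
    and single: "\<forall>i<k. card (B i) = 1"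
  shows "is_complete_graph k G"
proof -
  define r where "r i = the_elem (B i)" for i
  have r: "B i = {r i}" if "i < k" for i
    using single that unfolding r_def by (simp add: is_singleton_the_elem[symmetric] is_singleton_altdef)
  note disj = complete_minor_modelD(3)[OF model] and adj = complete_minor_modelD(4)[OF model]
  have V': "fst G = r ` {..<k}" using V r by auto
  have "inj_on r {..<k}"
    by (rule inj_onI) (use disj r in fastforce)
  then have "card (fst G) = k" using V' by (simp add: card_image)
  moreover have "snd G = {{a, b} | a b. a \<in> fst G \<and> b \<in> fst G \<and> a \<noteq> b}"
  proof
    show "snd G \<subseteq> {{a, b} | a b. a \<in> fst G \<and> b \<in> fst G \<and> a \<noteq> b}"
      using wf unfolding wf_graph_def by blast
    show "{{a, b} | a b. a \<in> fst G \<and> b \<in> fst G \<and> a \<noteq> b} \<subseteq> snd G"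
    proof
      fix e assume "e \<in> {{a, b} | a b. a \<in> fst G \<and> b \<in> fst G \<and> a \<noteq> b}"
      then obtain i j where "i < k" "j < k" "e = {r i, r j}" "r i \<noteq> r j" using V' by auto
      then show "e \<in> snd G" using adj[of i j] r by fastforce
    qed
  qed
  ultimately show ?thesis using wf unfolding is_complete_graph_def wf_graph_def by blast
qed

text \<open>Contract, one edge at a time, every branch set to a single vertex.\<close>
lemma contracts_to_complete_graph:
  assumes "wf_graph G" "fst G = (\<Union>i<k. B i)" "complete_minor_model k (snd G) B"
  shows "\<exists>H. contracts_to G H \<and> is_complete_graph k H"
  using assms
proof (induction "card (fst G)" arbitrary: G B rule: less_induct)
  case less
  note wf = less.prems(1) and V = less.prems(2) and model = less.prems(3)
  show ?case
  proof (cases "\<forall>i<k. card (B i) = 1")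
    case True
    then show ?thesis
      using is_complete_graph_if_singleton_branch_sets[OF wf V model] contracts_to.refl by blast
  next
    case False
    then obtain i where i: "i < k" "card (B i) \<noteq> 1" by blast
    obtain u where u: "u \<in> B i" using complete_minor_modelD(1)[OF model i(1)] by blast
    have "B i \<noteq> {u}"
    proof
      assume "B i = {u}"
      with i(2) show False by simp
    qed
    with connected_inD[OF complete_minor_modelD(2)[OF model i(1)], of "{u}"] u
    obtain w where w: "w \<in> B i" "u \<noteq> w" "{u, w} \<in> snd G"
      by blast
    let ?G = "contract G u w" and ?B = "B(i := B i - {w})"
    have w_notin: "w \<notin> B j" if "j < k" "j \<noteq> i" for j
      using complete_minor_modelD(3)[OF model that(1) i(1) that(2)] w(1) by blast
    have "(\<Union>j<k. ?B j) = (\<Union>j<k. B j) - {w}"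
    proof (intro equalityI subsetI)
      fix x assume "x \<in> (\<Union>j<k. ?B j)"
      then obtain j where "j < k" "x \<in> ?B j" by blast
      then show "x \<in> (\<Union>j<k. B j) - {w}" using w_notin by (cases "j = i") auto
    next
      fix x assume "x \<in> (\<Union>j<k. B j) - {w}"
      then obtain j where "j < k" "x \<in> B j" "x \<noteq> w" by blast
      then have "x \<in> ?B j" by (cases "j = i") auto
      with \<open>j < k\<close> show "x \<in> (\<Union>j<k. ?B j)" by blast
    qed
    then have V': "fst ?G = (\<Union>j<k. ?B j)" unfolding contract_simps V by simp
    have "u \<in> fst G" "w \<in> fst G" using V u w i by blast+
    have "finite (fst G)" using wf unfolding wf_graph_def by blast
    then have smaller: "card (fst ?G) < card (fst G)"
      unfolding contract_simps using \<open>w \<in> fst G\<close> by (rule card_Diff1_less)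
    have "wf_graph ?G" using wf_graph_contract[OF wf \<open>u \<in> fst G\<close> w(2)] .
    moreover have "complete_minor_model k (snd ?G) ?B"
      using complete_minor_model_contract[OF model i(1) u w(1,2)] .
    ultimately obtain H where "contracts_to ?G H" "is_complete_graph k H"
      using less.hyps[OF smaller] V' by blast
    then show ?thesis using contracts_to.step[OF w(3) w(2)] by blast
  qed
qed

lemma wf_graph_induced:
  assumes "wf_graph G" "U \<subseteq> fst G"
  shows "wf_graph (U, {e \<in> snd G. e \<subseteq> U})"
  unfolding wf_graph_def
proof (intro conjI ballI)
  show "finite (fst (U, {e \<in> snd G. e \<subseteq> U}))"
    using assms finite_subset unfolding wf_graph_def by auto
  fix e assume "e \<in> snd (U, {e \<in> snd G. e \<subseteq> U})"
  then have "e \<in> snd G" "e \<subseteq> U" by auto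
  then obtain a b where "a \<noteq> b" "e = {a, b}" using assms(1) unfolding wf_graph_def by blast
  with \<open>e \<subseteq> U\<close> show "\<exists>a b. a \<in> fst (U, {e \<in> snd G. e \<subseteq> U}) \<and> b \<in> fst (U, {e \<in> snd G. e \<subseteq> U})
      \<and> a \<noteq> b \<and> e = {a, b}" by auto
qed

lemma has_K_minor_if_complete_minor_model:
  assumes wf: "wf_graph G" and sub: "\<forall>i<k. B i \<subseteq> fst G" and model: "complete_minor_model k (snd G) B"
  shows "has_K_minor k G"
proof -
  define U where "U = (\<Union>i<k. B i)"
  define S where "S = (U, {e \<in> snd G. e \<subseteq> U})"
  have "U \<subseteq> fst G" using sub unfolding U_def by blast
  then have "wf_graph S" using wf_graph_induced[OF wf] unfolding S_def by blast
  then have "subgraph S G" using \<open>U \<subseteq> fst G\<close> unfolding subgraph_def S_def by auto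
  have "complete_minor_model k (snd S) B"
    by (rule complete_minor_model_mono[OF model]) (auto simp: S_def U_def)
  then obtain H where "contracts_to S H" "is_complete_graph k H"
    using contracts_to_complete_graph[OF \<open>wf_graph S\<close>, where k=k and B=B] unfolding S_def U_def by auto
  with \<open>subgraph S G\<close> show ?thesis unfolding has_K_minor_def by blast
qed

text \<open>After \<open>j\<close> sets have been chosen, at least \<open>3 a\<close> unused vertices remain for the next one.\<close>
lemma exists_disjoint_connected_sets:
  assumes V: "finite V" "1 \<le> a" "(j + 2) * a \<le> card V" and joins: "joins_disjoint_sets E V a"
  shows "\<exists>B. (\<forall>i<j. B i \<subseteq> V \<and> connected_in E (B i) \<and> card (B i) = a) \<and>
             (\<forall>i<j. \<forall>l<j. i \<noteq> l \<longrightarrow> B i \<inter> B l = {})"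
  using V(3)
proof (induction j)
  case 0
  then show ?case by simp
next
  case (Suc j)
  then obtain B where B: "\<forall>i<j. B i \<subseteq> V \<and> connected_in E (B i) \<and> card (B i) = a"
    "\<forall>i<j. \<forall>l<j. i \<noteq> l \<longrightarrow> B i \<inter> B l = {}" by auto
  let ?U = "\<Union>i<j. B i"
  have "card ?U = j * a"
    using B V(1) by (subst card_UN_disjoint) (auto intro: finite_subset)
  moreover have "?U \<subseteq> V" using B(1) by blast
  ultimately have "card (V - ?U) = card V - j * a"
    using V(1) by (simp add: card_Diff_subset finite_subset)
  then have "3 * a \<le> card (V - ?U)" using Suc.prems by (simp add: algebra_simps)
  with V(1,2) joins_disjoint_sets_subset[OF joins, of "V - ?U"]
  obtain D where D: "D \<subseteq> V - ?U" "connected_in E D" "card D = a"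
    using exists_connected_in_card_eq[of "V - ?U" a E] by auto
  have "\<forall>i<Suc j. (B(j := D)) i \<subseteq> V \<and> connected_in E ((B(j := D)) i) \<and> card ((B(j := D)) i) = a"
    using B(1) D by (auto simp: less_Suc_eq)
  moreover have "\<forall>i<Suc j. \<forall>l<Suc j. i \<noteq> l \<longrightarrow> (B(j := D)) i \<inter> (B(j := D)) l = {}"
    using B(2) D(1) by (auto simp: less_Suc_eq)
  ultimately show ?case by blast
qed

lemma has_K_minor_if_joins_disjoint_sets:
  assumes wf: "wf_graph G" and "1 \<le> a" "(k + 2) * a \<le> card (fst G)"
    and joins: "joins_disjoint_sets (snd G) (fst G) a"
  shows "has_K_minor k G"
proof -
  have "finite (fst G)" using wf unfolding wf_graph_def by blast
  then obtain B where B: "\<forall>i<k. B i \<subseteq> fst G \<and> connected_in (snd G) (B i) \<and> card (B i) = a"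
    "\<forall>i<k. \<forall>l<k. i \<noteq> l \<longrightarrow> B i \<inter> B l = {}"
    using exists_disjoint_connected_sets[OF _ assms(2,3) joins] by blast
  have "complete_minor_model k (snd G) B"
  proof (rule complete_minor_modelI)
    fix i assume "i < k"
    with B(1) \<open>1 \<le> a\<close> show "B i \<noteq> {}" "connected_in (snd G) (B i)"
      by (metis card.empty not_one_le_zero)+
  next
    fix i l assume il: "i < k" "l < k" "i \<noteq> l"
    with B(2) show "B i \<inter> B l = {}" by blast
    from il B show "\<exists>x\<in>B i. \<exists>y\<in>B l. {x, y} \<in> snd G"
      by (intro joins_disjoint_setsD[OF joins]) auto
  qed
  with wf B(1) show ?thesis using has_K_minor_if_complete_minor_model by blast
qed

section \<open>The random graph model\<close>

lemma finite_all_edges: "finite (all_edges n)"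
proof -
  have "all_edges n \<subseteq> (\<lambda>(a, b). {a, b}) ` ({..<n} \<times> {..<n})"
    unfolding all_edges_def by auto
  then show ?thesis by (rule finite_subset) auto
qed

lemma card_all_edges_le: "card (all_edges n) \<le> n ^ 2"
proof -
  have "card (all_edges n) \<le> card ((\<lambda>(a, b). {a, b}) ` ({..<n} \<times> {..<n}))"
    unfolding all_edges_def by (intro card_mono) auto
  also have "\<dots> \<le> card ({..<n} \<times> {..<n})" by (rule card_image_le) auto
  finally show ?thesis by (simp add: power2_eq_square)
qed

lemma sum_Pow_binomial_weights:
  fixes p t :: real
  assumes S: "finite S" and X: "X \<subseteq> S"
  shows "(\<Sum>E\<in>Pow S. p ^ card E * (1 - p) ^ (card S - card E) * t ^ card (E \<inter> X))
         = (p * t + (1 - p)) ^ card X"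
proof -
  let ?f = "\<lambda>e. p * (if e \<in> X then t else 1)"
  have "(p * t + (1 - p)) ^ card X = (\<Prod>e\<in>S. if e \<in> X then p * t + (1 - p) else 1)"
    using S X by (simp add: prod.If_cases Int_absorb1)
  also have "\<dots> = (\<Prod>e\<in>S. ?f e + (1 - p))"
    by (rule prod.cong) auto
  also have "\<dots> = (\<Sum>E\<in>Pow S. (\<Prod>e\<in>E. ?f e) * (\<Prod>e\<in>S - E. 1 - p))"
    by (rule prod_add[OF S])
  also have "\<dots> = (\<Sum>E\<in>Pow S. p ^ card E * (1 - p) ^ (card S - card E) * t ^ card (E \<inter> X))"
  proof (rule sum.cong)
    fix E assume "E \<in> Pow S"
    then have E: "E \<subseteq> S" "finite E" using S finite_subset by auto
    have "(\<Prod>e\<in>E. ?f e) = p ^ card E * t ^ card (E \<inter> X)"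
      using E(2) by (simp add: prod.distrib prod.If_cases Int_def)
    moreover have "(\<Prod>e\<in>S - E. 1 - p) = (1 - p) ^ (card S - card E)"
      using E S by (simp add: card_Diff_subset)
    ultimately show "(\<Prod>e\<in>E. ?f e) * (\<Prod>e\<in>S - E. 1 - p)
        = p ^ card E * (1 - p) ^ (card S - card E) * t ^ card (E \<inter> X)" by simp
  qed simp
  finally show ?thesis ..
qed

definition gnp_weight :: "nat \<Rightarrow> real \<Rightarrow> nat set set \<Rightarrow> real" where
  "gnp_weight n p E = p ^ card E * (1 - p) ^ (card (all_edges n) - card E)"

lemma gnp_prob_eq_sum: "gnp_prob n p P = (\<Sum>E\<in>{E\<in>Pow (all_edges n). P ({..<n}, E)}. gnp_weight n p E)"
  unfolding gnp_prob_def gnp_weight_def by (simp add: Pow_def)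

lemma gnp_weight_nonneg: "0 \<le> p \<Longrightarrow> p \<le> 1 \<Longrightarrow> 0 \<le> gnp_weight n p E"
  unfolding gnp_weight_def by simp

lemma gnp_moment:
  assumes "X \<subseteq> all_edges n"
  shows "(\<Sum>E\<in>Pow (all_edges n). gnp_weight n p E * t ^ card (E \<inter> X)) = (p * t + (1 - p)) ^ card X"
  using sum_Pow_binomial_weights[OF finite_all_edges assms] unfolding gnp_weight_def .

lemma gnp_prob_True: "gnp_prob n p (\<lambda>_. True) = 1"
  using gnp_moment[of "{}" n p 1] by (simp add: gnp_prob_eq_sum Pow_def)

lemma gnp_prob_not: "gnp_prob n p (\<lambda>G. \<not> P G) = 1 - gnp_prob n p P"
proof -
  have "gnp_prob n p P + gnp_prob n p (\<lambda>G. \<not> P G) = gnp_prob n p (\<lambda>_. True)"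
    unfolding gnp_prob_eq_sum using finite_all_edges
    by (subst sum.union_disjoint[symmetric]) (auto intro!: sum.cong)
  then show ?thesis using gnp_prob_True by simp
qed

lemma gnp_prob_mono:
  assumes "0 \<le> p" "p \<le> 1" and "\<And>E. E \<subseteq> all_edges n \<Longrightarrow> P ({..<n}, E) \<Longrightarrow> Q ({..<n}, E)"
  shows "gnp_prob n p P \<le> gnp_prob n p Q"
  unfolding gnp_prob_eq_sum using assms finite_all_edges
  by (intro sum_mono2) (auto simp: gnp_weight_nonneg)

lemma gnp_prob_disj_le:
  assumes "0 \<le> p" "p \<le> 1"
  shows "gnp_prob n p (\<lambda>G. P G \<or> Q G) \<le> gnp_prob n p P + gnp_prob n p Q"
proof -
  let ?S = "\<lambda>P. {E\<in>Pow (all_edges n). P ({..<n}, E)}"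
  have "?S (\<lambda>G. P G \<or> Q G) = ?S P \<union> ?S Q" by auto
  moreover have "finite (?S P)" "finite (?S Q)" using finite_all_edges by auto
  ultimately show ?thesis
    unfolding gnp_prob_eq_sum using assms
    by (simp add: sum_Un gnp_weight_nonneg sum_nonneg)
qed

lemma gnp_prob_Bex_le:
  assumes "0 \<le> p" "p \<le> 1" "finite I"
  shows "gnp_prob n p (\<lambda>G. \<exists>i\<in>I. P i G) \<le> (\<Sum>i\<in>I. gnp_prob n p (P i))"
  using assms(3)
proof (induction I rule: finite_induct)
  case empty
  then show ?case by (simp add: gnp_prob_eq_sum)
next
  case (insert i I)
  have "gnp_prob n p (\<lambda>G. \<exists>j\<in>insert i I. P j G) \<le> gnp_prob n p (P i) + gnp_prob n p (\<lambda>G. \<exists>j\<in>I. P j G)"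
    using gnp_prob_disj_le[OF assms(1,2), where P = "P i" and Q = "\<lambda>G. \<exists>j\<in>I. P j G"] by simp
  with insert show ?case by simp
qed

lemma gnp_prob_markov:
  assumes "0 \<le> p" "p \<le> 1" "0 < c"
    and f_nonneg: "\<And>E. E \<subseteq> all_edges n \<Longrightarrow> 0 \<le> f E"
    and f_ge: "\<And>E. E \<subseteq> all_edges n \<Longrightarrow> P ({..<n}, E) \<Longrightarrow> c \<le> f E"
  shows "gnp_prob n p P \<le> (\<Sum>E\<in>Pow (all_edges n). gnp_weight n p E * f E) / c"
proof -
  have "c * gnp_prob n p P = (\<Sum>E\<in>{E\<in>Pow (all_edges n). P ({..<n}, E)}. gnp_weight n p E * c)"
    by (simp add: gnp_prob_eq_sum sum_distrib_left mult.commute)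
  also have "\<dots> \<le> (\<Sum>E\<in>{E\<in>Pow (all_edges n). P ({..<n}, E)}. gnp_weight n p E * f E)"
    using assms by (intro sum_mono mult_left_mono) (auto simp: gnp_weight_nonneg)
  also have "\<dots> \<le> (\<Sum>E\<in>Pow (all_edges n). gnp_weight n p E * f E)"
    using assms finite_all_edges by (intro sum_mono2) (auto simp: gnp_weight_nonneg)
  finally show ?thesis using \<open>0 < c\<close> by (simp add: field_simps)
qed

lemma gnp_prob_card_ge:
  assumes "0 \<le> p" "p \<le> 1" "X \<subseteq> all_edges n" "1 \<le> t"
  shows "gnp_prob n p (\<lambda>G. m \<le> card (snd G \<inter> X)) \<le> (p * t + (1 - p)) ^ card X / t ^ m"
proof -
  have "gnp_prob n p (\<lambda>G. m \<le> card (snd G \<inter> X))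
      \<le> (\<Sum>E\<in>Pow (all_edges n). gnp_weight n p E * t ^ card (E \<inter> X)) / t ^ m"
    using assms by (intro gnp_prob_markov) (auto intro: power_increasing)
  then show ?thesis by (simp add: gnp_moment[OF assms(3)])
qed

lemma gnp_prob_card_le:
  assumes "0 \<le> p" "p \<le> 1" "X \<subseteq> all_edges n" "0 < t" "t \<le> 1"
  shows "gnp_prob n p (\<lambda>G. card (snd G \<inter> X) \<le> m) \<le> (p * t + (1 - p)) ^ card X / t ^ m"
proof -
  have "gnp_prob n p (\<lambda>G. card (snd G \<inter> X) \<le> m)
      \<le> (\<Sum>E\<in>Pow (all_edges n). gnp_weight n p E * t ^ card (E \<inter> X)) / t ^ m"
    using assms by (intro gnp_prob_markov) (auto intro: power_decreasing)
  then show ?thesis by (simp add: gnp_moment[OF assms(3)])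
qed

section \<open>Dense pairs in \<open>G(n, p)\<close>\<close>

definition edges_between :: "'a set \<Rightarrow> 'a set \<Rightarrow> 'a set set" where
  "edges_between A B = {{u, v} | u v. u \<in> A \<and> v \<in> B}"

definition disjoint_pairs :: "nat \<Rightarrow> nat \<Rightarrow> (nat set \<times> nat set) set" where
  "disjoint_pairs n a =
     {(A, B). A \<subseteq> {..<n} \<and> B \<subseteq> {..<n} \<and> A \<inter> B = {} \<and> card A = a \<and> card B = a}"

lemma card_edges_between:
  assumes "A \<inter> B = {}" "finite A" "finite B"
  shows "card (edges_between A B) = card A * card B"
proof -
  have "edges_between A B = (\<lambda>(u, v). {u, v}) ` (A \<times> B)" unfolding edges_between_def by auto
  moreover have "inj_on (\<lambda>(u, v). {u, v}) (A \<times> B)"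
    using assms(1) unfolding inj_on_def by (auto simp: doubleton_eq_iff)
  ultimately show ?thesis using assms by (simp add: card_image card_cartesian_product)
qed

lemma edges_between_subset_all_edges:
  "A \<subseteq> {..<n} \<Longrightarrow> B \<subseteq> {..<n} \<Longrightarrow> A \<inter> B = {} \<Longrightarrow> edges_between A B \<subseteq> all_edges n"
  unfolding edges_between_def all_edges_def by blast

lemma finite_disjoint_pairs: "finite (disjoint_pairs n a)"
  by (rule finite_subset[of _ "Pow {..<n} \<times> Pow {..<n}"]) (auto simp: disjoint_pairs_def)

lemma card_disjoint_pairs_le: "card (disjoint_pairs n a) \<le> 4 ^ n"
proof -
  have "card (disjoint_pairs n a) \<le> card (Pow {..<n} \<times> Pow {..<n})"
    by (intro card_mono) (auto simp: disjoint_pairs_def)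
  also have "\<dots> = 4 ^ n" by (simp add: card_cartesian_product card_Pow flip: power_mult_distrib)
  finally show ?thesis .
qed

lemma wf_graph_all_edges: "E \<subseteq> all_edges n \<Longrightarrow> wf_graph ({..<n}, E)"
  unfolding wf_graph_def all_edges_def by fastforce

text \<open>Deleting at most \<open>m\<close> edges keeps an edge between every two disjoint \<open>a\<close>-sets, so a
  \<open>K\<^sub>k\<close>-minor survives.\<close>
lemma far_from_K_minor_free_if_dense_pairs:
  assumes "1 \<le> a" "(k + 2) * a \<le> n" "E \<subseteq> all_edges n"
    and "eps * real (card E) \<le> real m"
    and dense: "\<forall>(A, B)\<in>disjoint_pairs n a. m < card (E \<inter> edges_between A B)"
  shows "far_from_K_minor_free eps k ({..<n}, E)"
  unfolding far_from_K_minor_free_def fst_conv snd_conv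
proof (intro allI impI)
  fix F assume F: "F \<subseteq> E" and no_minor: "\<not> has_K_minor k ({..<n}, E - F)"
  have "finite E" using finite_all_edges assms(3) by (rule finite_subset[rotated])
  then have "finite F" using F by (rule finite_subset[rotated])
  show "eps * real (card E) < real (card F)"
  proof (rule ccontr)
    assume "\<not> ?thesis"
    then have "real (card F) \<le> real m" using assms(4) by linarith
    then have "card F \<le> m" by simp
    have "joins_disjoint_sets (E - F) {..<n} a"
      unfolding joins_disjoint_sets_def
    proof (intro allI impI)
      fix A B assume AB: "A \<subseteq> {..<n}" "B \<subseteq> {..<n}" "A \<inter> B = {}" "card A = a" "card B = a"
      then have "(A, B) \<in> disjoint_pairs n a" unfolding disjoint_pairs_def by simp
      from bspec[OF dense this] have "m < card (E \<inter> edges_between A B)" by simp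
      have "\<not> E \<inter> edges_between A B \<subseteq> F"
      proof
        assume "E \<inter> edges_between A B \<subseteq> F"
        then have "card (E \<inter> edges_between A B) \<le> card F" by (rule card_mono[OF \<open>finite F\<close>])
        with \<open>m < card (E \<inter> edges_between A B)\<close> \<open>card F \<le> m\<close> show False by linarith
      qed
      then obtain e where "e \<in> E - F" "e \<in> edges_between A B" by blast
      then obtain u v where "{u, v} \<in> E - F" "u \<in> A" "v \<in> B"
        unfolding edges_between_def by blast
      then show "\<exists>u\<in>A. \<exists>v\<in>B. {u, v} \<in> E - F" by blast
    qed
    then have "has_K_minor k ({..<n}, E - F)"
      using has_K_minor_if_joins_disjoint_sets[of "({..<n}, E - F)" a k]
        wf_graph_all_edges[of "E - F" n] assms(1,2,3) by auto
    with no_minor show False by contradiction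
  qed
qed

lemma edge_count_tail_estimate:
  fixes k n N :: nat
  assumes "k \<ge> 1" "n \<ge> 1" "N \<le> n ^ 2"
  shows "(1 + 1000 * real k ^ 2 / real n) ^ N / 2 ^ (2000 * k ^ 2 * n) \<le> exp (- 2 * real n)"
proof -
  define p where "p = 1000 * real k ^ 2 / real n"
  define m where "m = 1000 * k ^ 2 * n"
  have "(1 + p) ^ N \<le> exp p ^ N"
    unfolding p_def by (intro power_mono) (auto simp: add.commute)
  also have "\<dots> = exp (real N * p)" by (simp add: exp_of_nat_mult[symmetric])
  also have "\<dots> \<le> exp (real m)"
  proof -
    have "real N * p \<le> real (n ^ 2) * p" using assms(3) by (intro mult_right_mono) (auto simp: p_def)
    also have "\<dots> = real m" using assms(2) by (simp add: p_def m_def power2_eq_square field_simps)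
    finally show ?thesis by simp
  qed
  also have "\<dots> = exp 1 ^ m" by (simp add: exp_of_nat_mult[symmetric])
  also have "\<dots> \<le> 3 ^ m" using exp_le by (intro power_mono) auto
  finally have "(1 + p) ^ N / 2 ^ (2000 * k ^ 2 * n) \<le> 3 ^ m / 4 ^ m"
    by (simp add: m_def power_mult divide_right_mono)
  also have "\<dots> = (3 / 4) ^ m" by (simp add: power_divide)
  also have "\<dots> \<le> (3 / 4) ^ (8 * n)"
  proof (rule power_decreasing)
    have "1 \<le> k ^ 2" using assms(1) by simp
    then show "8 * n \<le> m" unfolding m_def by (intro mult_le_mono1) linarith
  qed auto
  also have "\<dots> = ((3 / 4) ^ 8) ^ n" by (simp add: power_mult)
  also have "\<dots> \<le> exp (-2) ^ n"
  proof (rule power_mono)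
    have "exp (2::real) = exp 1 ^ 2" by (simp add: exp_of_nat_mult[symmetric])
    also have "\<dots> \<le> 3 ^ 2" using exp_le by (intro power_mono) auto
    finally have "1 / 9 \<le> exp (-2::real)" by (simp add: exp_minus field_simps)
    moreover have "((3::real) / 4) ^ 8 \<le> 1 / 9" by (simp add: power_divide)
    ultimately show "((3::real) / 4) ^ 8 \<le> exp (-2)" by linarith
  qed auto
  also have "\<dots> = exp (- 2 * real n)" by (simp add: exp_of_nat_mult[symmetric] mult.commute)
  finally show ?thesis unfolding p_def .
qed

lemma sparse_pair_tail_estimate:
  fixes k n a :: nat and p :: real
  assumes "n \<ge> 1" "n \<le> 2 * k * a" and p: "p = 1000 * real k ^ 2 / real n" "p \<le> 1"
  shows "4 ^ n * (1 - p / 2) ^ (a * a) * 2 ^ (40 * n) \<le> exp (- 2 * real n)"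
proof -
  have "(1 - p / 2) ^ (a * a) \<le> exp (- p / 2) ^ (a * a)"
    using p exp_ge_add_one_self[of "- p / 2"] by (intro power_mono) auto
  also have "\<dots> = exp (- (p / 2 * real (a * a)))"
    by (simp add: exp_of_nat_mult[symmetric] mult.commute)
  also have "\<dots> \<le> exp (- 125 * real n)"
  proof -
    have "real n \<le> 2 * real k * real a"
      using assms(2) by (metis of_nat_le_iff of_nat_mult of_nat_numeral)
    then have "real n * real n \<le> (2 * real k * real a) * (2 * real k * real a)"
      by (intro mult_mono) auto
    then have "125 * real n \<le> p / 2 * real (a * a)" using assms(1) unfolding p(1)
      by (simp add: field_simps power2_eq_square)
    then show ?thesis by simp
  qed
  finally have pair: "(1 - p / 2) ^ (a * a) \<le> exp (- 125 * real n)" .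
  have "(4::real) ^ n * 2 ^ (40 * n) = 2 ^ (42 * n)"
  proof -
    have "(4::real) ^ n = 2 ^ (2 * n)" by (simp add: power_mult)
    then have "(4::real) ^ n * 2 ^ (40 * n) = 2 ^ (2 * n + 40 * n)" by (simp only: power_add)
    then show ?thesis by simp
  qed
  also have "\<dots> \<le> exp 1 ^ (42 * n)"
    using exp_ge_add_one_self[of 1] by (intro power_mono) auto
  also have "\<dots> = exp (42 * real n)" by (simp add: exp_of_nat_mult[symmetric])
  finally have edges: "(4::real) ^ n * 2 ^ (40 * n) \<le> exp (42 * real n)" .
  have "4 ^ n * (1 - p / 2) ^ (a * a) * 2 ^ (40 * n) = (4 ^ n * 2 ^ (40 * n)) * (1 - p / 2) ^ (a * a)"
    by simp
  also have "\<dots> \<le> exp (42 * real n) * exp (- 125 * real n)"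
    using edges pair p(2) by (intro mult_mono) auto
  also have "\<dots> \<le> exp (- 2 * real n)" by (simp add: exp_add[symmetric])
  finally show ?thesis .
qed

lemma twice_exp_le_powr:
  fixes x :: real
  assumes "1 \<le> x"
  shows "2 * exp (- 2 * x) \<le> 2 powr (- x)"
proof -
  have "2 \<le> exp x" using exp_ge_add_one_self[of x] assms by linarith
  then have "2 * exp (- 2 * x) \<le> exp x * exp (- 2 * x)" by simp
  also have "\<dots> = exp (- x)" by (simp add: exp_add[symmetric])
  also have "\<dots> \<le> exp (- x * ln 2)"
    using ln_le_minus_one[of 2] assms by (intro exp_mono) (simp add: mult_le_cancel_left1)
  also have "\<dots> = 2 powr (- x)" by (simp add: powr_def)
  finally show ?thesis .
qed

lemma gnp_prob_too_many_edges:
  fixes k n :: nat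
  assumes "k \<ge> 1" "n \<ge> 1" and p: "p = 1000 * real k ^ 2 / real n" "p \<le> 1"
  shows "gnp_prob n p (\<lambda>G. 2000 * k ^ 2 * n \<le> card (snd G \<inter> all_edges n)) \<le> exp (- 2 * real n)"
proof -
  have "gnp_prob n p (\<lambda>G. 2000 * k ^ 2 * n \<le> card (snd G \<inter> all_edges n))
      \<le> (p * 2 + (1 - p)) ^ card (all_edges n) / 2 ^ (2000 * k ^ 2 * n)"
    using p by (intro gnp_prob_card_ge) auto
  also have "\<dots> \<le> exp (- 2 * real n)"
    using edge_count_tail_estimate[OF assms(1,2) card_all_edges_le] p(1) by (simp add: add.commute)
  finally show ?thesis .
qed

lemma gnp_prob_sparse_pair:
  fixes k n a :: nat
  assumes "n \<ge> 1" "n \<le> 2 * k * a" and p: "p = 1000 * real k ^ 2 / real n" "p \<le> 1"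
  shows "gnp_prob n p (\<lambda>G. \<exists>P\<in>disjoint_pairs n a. card (snd G \<inter> edges_between (fst P) (snd P)) \<le> 40 * n)
    \<le> exp (- 2 * real n)"
proof -
  have "0 \<le> p" using p by simp
  have pair: "gnp_prob n p (\<lambda>G. card (snd G \<inter> edges_between (fst P) (snd P)) \<le> 40 * n)
      \<le> (1 - p / 2) ^ (a * a) * 2 ^ (40 * n)" if "P \<in> disjoint_pairs n a" for P
  proof -
    obtain A B where "P = (A, B)" by fastforce
    with that have P: "P = (A, B)" "A \<subseteq> {..<n}" "B \<subseteq> {..<n}" "A \<inter> B = {}" "card A = a" "card B = a"
      unfolding disjoint_pairs_def by auto
    then have sub: "edges_between A B \<subseteq> all_edges n" by (simp add: edges_between_subset_all_edges)
    have "card (edges_between A B) = a * a"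
      using P by (simp add: card_edges_between finite_subset)
    with gnp_prob_card_le[OF \<open>0 \<le> p\<close> p(2) sub, of "1 / 2" "40 * n"] P(1)
    show ?thesis by (simp add: power_one_over field_simps)
  qed
  have "gnp_prob n p (\<lambda>G. \<exists>P\<in>disjoint_pairs n a. card (snd G \<inter> edges_between (fst P) (snd P)) \<le> 40 * n)
      \<le> (\<Sum>P\<in>disjoint_pairs n a. gnp_prob n p (\<lambda>G. card (snd G \<inter> edges_between (fst P) (snd P)) \<le> 40 * n))"
    by (rule gnp_prob_Bex_le[OF \<open>0 \<le> p\<close> p(2) finite_disjoint_pairs])
  also have "\<dots> \<le> real (card (disjoint_pairs n a)) * ((1 - p / 2) ^ (a * a) * 2 ^ (40 * n))"
    using sum_mono[of "disjoint_pairs n a", OF pair] by simp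
  also have "\<dots> \<le> 4 ^ n * ((1 - p / 2) ^ (a * a) * 2 ^ (40 * n))"
    using card_disjoint_pairs_le[of n a] p(2) by (intro mult_right_mono) (simp_all flip: of_nat_le_iff)
  also have "\<dots> \<le> exp (- 2 * real n)"
    using sparse_pair_tail_estimate[OF assms] by (simp add: mult.assoc)
  finally show ?thesis .
qed

lemma div_bounds_for_branch_sets:
  fixes k n :: nat
  assumes "k \<ge> 3" "(k + 2) ^ 2 \<le> n"
  shows "1 \<le> n div (k + 2)" "(k + 2) * (n div (k + 2)) \<le> n" "n \<le> 2 * k * (n div (k + 2))"
proof -
  define a where "a = n div (k + 2)"
  have "(k + 2) * (k + 2) div (k + 2) \<le> n div (k + 2)"
    using assms(2) by (intro div_le_mono) (simp add: power2_eq_square)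
  moreover have "(k + 2) * (k + 2) div (k + 2) = k + 2" by (rule nonzero_mult_div_cancel_right) simp
  ultimately have "k + 2 \<le> a" unfolding a_def by linarith
  then show "1 \<le> n div (k + 2)" unfolding a_def by simp
  show "(k + 2) * (n div (k + 2)) \<le> n" by (rule times_div_less_eq_dividend)
  have "n = (k + 2) * a + n mod (k + 2)" unfolding a_def by (metis div_mult_mod_eq mult.commute)
  also have "\<dots> \<le> (k + 2) * a + a" using \<open>k + 2 \<le> a\<close> mod_less_divisor[of "k + 2" n] by linarith
  also have "\<dots> = (k + 3) * a" by (simp add: algebra_simps)
  also have "\<dots> \<le> 2 * k * a" using assms(1) by (intro mult_le_mono1) simp
  finally show "n \<le> 2 * k * (n div (k + 2))" unfolding a_def .
qed

lemma gnp_far_from_K_minor_free: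
  fixes k n :: nat
  assumes k: "k \<ge> 3" and n: "n \<ge> 1000 * k ^ 2 + (k + 2) ^ 2 + 1"
  shows "1 - 2 powr (- real n) \<le> gnp_prob n (1000 * real k ^ 2 / real n)
           (\<lambda>G. real (card (snd G)) \<le> 2000 * real k ^ 2 * real n \<and>
                far_from_K_minor_free (1 / (50 * real k ^ 2)) k G)"
    (is "_ \<le> gnp_prob n ?p ?Q")
proof -
  define a where "a = n div (k + 2)"
  define M where "M = 2000 * k ^ 2 * n"
  define Dense where "Dense G \<longleftrightarrow> card (snd G) \<le> M \<and>
      (\<forall>P\<in>disjoint_pairs n a. 40 * n < card (snd G \<inter> edges_between (fst P) (snd P)))" for G :: "nat graph"
  have "1 \<le> n" "(k + 2) ^ 2 \<le> n" "1000 * k ^ 2 \<le> n" using n by simp_all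
  then have "1000 * real k ^ 2 \<le> real n"
    by (metis of_nat_le_iff of_nat_mult of_nat_numeral of_nat_power)
  then have p: "0 \<le> ?p" "?p \<le> 1" using \<open>1 \<le> n\<close> by simp_all
  note a = div_bounds_for_branch_sets[OF k \<open>(k + 2) ^ 2 \<le> n\<close>, folded a_def]
  have "?Q ({..<n}, E)" if E: "E \<subseteq> all_edges n" "Dense ({..<n}, E)" for E
  proof
    have "card E \<le> M" using E(2) unfolding Dense_def by simp
    then have "real (card E) \<le> real M" by simp
    also have "real M = 2000 * real k ^ 2 * real n" by (simp add: M_def)
    finally show edges: "real (card (snd ({..<n}, E))) \<le> 2000 * real k ^ 2 * real n" by simp
    have "1 / (50 * real k ^ 2) * real (card E) \<le> 1 / (50 * real k ^ 2) * (2000 * real k ^ 2 * real n)"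
      using edges by (intro mult_left_mono) auto
    also have "\<dots> = real (40 * n)" using k by (simp add: field_simps)
    finally have "1 / (50 * real k ^ 2) * real (card E) \<le> real (40 * n)" .
    moreover have "\<forall>(A, B)\<in>disjoint_pairs n a. 40 * n < card (E \<inter> edges_between A B)"
      using E(2) unfolding Dense_def by (simp add: case_prod_beta)
    ultimately show "far_from_K_minor_free (1 / (50 * real k ^ 2)) k ({..<n}, E)"
      by (rule far_from_K_minor_free_if_dense_pairs[OF a(1,2) E(1)])
  qed
  then have "gnp_prob n ?p Dense \<le> gnp_prob n ?p ?Q" by (intro gnp_prob_mono[OF p])
  have "gnp_prob n ?p (\<lambda>G. \<not> Dense G) \<le> gnp_prob n ?p (\<lambda>G. M \<le> card (snd G \<inter> all_edges n) \<or>
      (\<exists>P\<in>disjoint_pairs n a. card (snd G \<inter> edges_between (fst P) (snd P)) \<le> 40 * n))"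
  proof (rule gnp_prob_mono[OF p])
    fix E assume "E \<subseteq> all_edges n" "\<not> Dense ({..<n}, E)"
    then show "M \<le> card (snd ({..<n}, E) \<inter> all_edges n) \<or>
      (\<exists>P\<in>disjoint_pairs n a. card (snd ({..<n}, E) \<inter> edges_between (fst P) (snd P)) \<le> 40 * n)"
      unfolding Dense_def by (auto simp: Int_absorb2 not_le not_less)
  qed
  also have "\<dots> \<le> gnp_prob n ?p (\<lambda>G. M \<le> card (snd G \<inter> all_edges n)) +
      gnp_prob n ?p (\<lambda>G. \<exists>P\<in>disjoint_pairs n a. card (snd G \<inter> edges_between (fst P) (snd P)) \<le> 40 * n)"
    by (rule gnp_prob_disj_le[OF p])
  also have "\<dots> \<le> exp (- 2 * real n) + exp (- 2 * real n)"
  proof (rule add_mono)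
    show "gnp_prob n ?p (\<lambda>G. M \<le> card (snd G \<inter> all_edges n)) \<le> exp (- 2 * real n)"
      unfolding M_def by (rule gnp_prob_too_many_edges) (use k \<open>1 \<le> n\<close> p(2) in auto)
    show "gnp_prob n ?p (\<lambda>G. \<exists>P\<in>disjoint_pairs n a.
        card (snd G \<inter> edges_between (fst P) (snd P)) \<le> 40 * n) \<le> exp (- 2 * real n)"
      by (rule gnp_prob_sparse_pair[OF \<open>1 \<le> n\<close> a(3) HOL.refl p(2)])
  qed
  also have "\<dots> \<le> 2 powr (- real n)" using twice_exp_le_powr[of "real n"] \<open>1 \<le> n\<close> by simp
  finally have "gnp_prob n ?p (\<lambda>G. \<not> Dense G) \<le> 2 powr (- real n)" .
  with \<open>gnp_prob n ?p Dense \<le> gnp_prob n ?p ?Q\<close> show ?thesis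
    using gnp_prob_not[of n ?p Dense] by linarith
qed

theorem mainTheorem3:
  fixes k :: nat
  assumes "k \<ge> 3"
  shows "\<exists>c > 0. \<exists>N. \<forall>n \<ge> N.
           gnp_prob n (1000 * real k ^ 2 / real n)
             (\<lambda>G. real (card (snd G)) \<le> 2000 * real k ^ 2 * real n \<and>
                  far_from_K_minor_free (1 / (50 * real k ^ 2)) k G)
           \<ge> 1 - 2 powr (- c * real n)"
  using gnp_far_from_K_minor_free[OF assms]
  by (intro exI[of _ "1::real"] conjI exI[of _ "1000 * k ^ 2 + (k + 2) ^ 2 + 1"]) auto

end
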